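(* Fix $k\in\mathbb{Z}_{\ge0}$. Let $\{K(\alpha)\}_{\alpha\in\mathfrak{c}\cup\{\mathfrak{c}\}}$ be a family of pairwise disjoint ubiquitously dense subsets of $[0,\infty)$, each of cardinality $\mathfrak{c}$, and for each $\alpha$ let $R(\alpha)$ be a $K(\alpha)$-gauge system on $\Omega$. Let $\mathbb{F}_{k,\alpha}=\{\tilde\Lambda^k[R(\alpha)](x,y)\mid x,y\in N(\Omega),\ x\neq y\}$. Then the set $\{1\}\cup\bigcup_{\alpha\in\mathfrak{c}\cup\{\mathfrak{c}\}}\mathbb{F}_{k,\alpha}$ is linearly independent over $\mathbb{Q}$ (i.e., every finite collection of distinct elements of it is linearly independent over $\mathbb{Q}$).
   Context: $\mathfrak{c}\cup\{\mathfrak{c}\}$ is the ordinal successor of $\mathfrak{c}$. A subset $S$ of $[0,\infty)$ is ubiquitously dense if $\operatorname{card}(U\cap S)=\operatorname{card}(S)$ for every non-empty open $U\subseteq[0,\infty)$. Fix a bijection $Q\colon\mathbb{Z}_{\ge0}\to\mathbb{Q}_{\ge0}$ with property (M): setting $\mu_m=\min Q^{-1}([m,m+1)\cap\mathbb{Q})$, we have $Q(\mu_m)=m$ and $\mu_m<\mu_{m+1}$ for all $m$. For a summable sequence $\alpha=(a_i)$ of positive reals and $B\subseteq\mathbb{Q}_{\ge0}$, $\langle\alpha,B\rangle=\sum_{i:\,Q(i)\in B}a_i$ ($=0$ if $B=\emptyset$). For $k\in\mathbb{Z}_{\ge0}$ let $F_k(n)=2^n+k$ and $\lambda^k_i=2^{-F_k(i)}$,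 $\lambda^k=(\lambda^k_i)_{i\ge0}$. $\Omega$ is a discrete space of cardinality $\mathfrak{c}$ and $N(\Omega)=\Omega^{\mathbb{Z}_{\ge0}}$ with the product topology. For $T\subseteq[0,\infty)$, a $T$-semi-metric on a set $Y$ is a symmetric map $r\colon Y\times Y\to[0,\infty)$ with $r(x,y)=0$ iff $x=y$ and $r(x,y)\in T$ for $x\ne y$; it is strongly rigid if $r(x,y)=r(u,v)\neq0$ implies $\{x,y\}=\{u,v\}$. For dense $S\subseteq[0,\infty)$, an $S$-gauge system on $\Omega$ is a sequence $(r_i)_{i\ge0}$ with each $r_i$ a strongly rigid $(S\cap(i,i+1))$-semi-metric on $\Omega$. Put $J(m,t)=[m,t)\cap\mathbb{Q}$, $\Lambda^k_m[r](a,b)=\langle\lambda^k,J(m,r(a,b))\rangle$ for $a,b\in\Omega$, and for $x=(x_i),y=(y_i)\in N(\Omega)$, $\Lambda^k[R](x,y)=\sum_{m\ge0}\Lambda^k_m[r_m](x_m,y_m)=\langle\lambda^k,\bigsqcup_{m\ge0}J(m,r_m(x_m,y_m))\rangle$. For each $n\in\mathbb{Z}_{\ge0}$ fix an injective map $f_n\colon\Omega^{n+1}\to\Omega$, and define $\Phi\colon N(\Omega)\to N(\Omega)$ by $\Phi(x)_{2n}=x_n$, $\Phi(x)_{2n+1}=f_n(x_0,\dots,x_n)$. Finally $\tilde\Lambda^k[R](x,y)=\Lambda^k[R](\Phi(x),\Phi(y))$. *)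

theory Defs
  imports "HOL-Analysis.Analysis" "HOL-Library.Equipollence"
begin

definition mu :: "(nat \<Rightarrow> rat) \<Rightarrow> nat \<Rightarrow> nat" where
  "mu Q m = (LEAST i. of_nat m \<le> Q i \<and> Q i < of_nat m + 1)"

definition enum_ok :: "(nat \<Rightarrow> rat) \<Rightarrow> bool" where
  "enum_ok Q \<longleftrightarrow> bij_betw Q UNIV {q. q \<ge> 0} \<and>
     (\<forall>m. Q (mu Q m) = of_nat m \<and> mu Q m < mu Q (Suc m))"

definition pairing :: "(nat \<Rightarrow> rat) \<Rightarrow> (nat \<Rightarrow> real) \<Rightarrow> rat set \<Rightarrow> real" where
  "pairing Q a B = (\<Sum>i. if Q i \<in> B then a i else 0)"

definition lam :: "nat \<Rightarrow> nat \<Rightarrow> real" where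
  "lam k i = 1 / 2 ^ (2 ^ i + k)"

definition J :: "nat \<Rightarrow> real \<Rightarrow> rat set" where
  "J m t = {q. of_nat m \<le> q \<and> real_of_rat q < t}"

definition ubiq_dense :: "real set \<Rightarrow> bool" where
  "ubiq_dense S \<longleftrightarrow> S \<subseteq> {0..} \<and>
     (\<forall>U. openin (top_of_set {0..}) U \<and> U \<noteq> {} \<longrightarrow> (U \<inter> S) \<approx> S)"

definition semi_metric_on :: "real set \<Rightarrow> ('w \<Rightarrow> 'w \<Rightarrow> real) \<Rightarrow> bool" where
  "semi_metric_on T r \<longleftrightarrow> (\<forall>x y. r x y = r y x \<and> r x y \<ge> 0 \<and> (r x y = 0 \<longleftrightarrow> x = y)
       \<and> (x \<noteq> y \<longrightarrow> r x y \<in> T))"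

definition strongly_rigid :: "('w \<Rightarrow> 'w \<Rightarrow> real) \<Rightarrow> bool" where
  "strongly_rigid r \<longleftrightarrow> (\<forall>x y u v. r x y = r u v \<and> r x y \<noteq> 0 \<longrightarrow> {x, y} = {u, v})"

definition gauge_system :: "real set \<Rightarrow> (nat \<Rightarrow> 'w \<Rightarrow> 'w \<Rightarrow> real) \<Rightarrow> bool" where
  "gauge_system S R \<longleftrightarrow> S \<subseteq> {0..} \<and> {0..} \<subseteq> closure S \<and>
     (\<forall>i. semi_metric_on (S \<inter> {real i<..<real i + 1}) (R i) \<and> strongly_rigid (R i))"

definition LamM :: "(nat \<Rightarrow> rat) \<Rightarrow> nat \<Rightarrow> nat \<Rightarrow> ('w \<Rightarrow> 'w \<Rightarrow> real) \<Rightarrow> 'w \<Rightarrow> 'w \<Rightarrow> real" where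
  "LamM Q k m r a b = pairing Q (lam k) (J m (r a b))"

definition Lam :: "(nat \<Rightarrow> rat) \<Rightarrow> nat \<Rightarrow> (nat \<Rightarrow> 'w \<Rightarrow> 'w \<Rightarrow> real) \<Rightarrow> (nat \<Rightarrow> 'w) \<Rightarrow> (nat \<Rightarrow> 'w) \<Rightarrow> real" where
  "Lam Q k R x y = (\<Sum>m. LamM Q k m (R m) (x m) (y m))"

(* Phi, with f n : Omega^(n+1) -> Omega given on lists of length n+1 *)
definition Phi :: "(nat \<Rightarrow> 'w list \<Rightarrow> 'w) \<Rightarrow> (nat \<Rightarrow> 'w) \<Rightarrow> nat \<Rightarrow> 'w" where
  "Phi f x j = (if even j then x (j div 2) else f (j div 2) (map x [0..<j div 2 + 1]))"

definition LamT :: "(nat \<Rightarrow> rat) \<Rightarrow> (nat \<Rightarrow> 'w list \<Rightarrow> 'w) \<Rightarrow> nat \<Rightarrow> (nat \<Rightarrow> 'w \<Rightarrow> 'w \<Rightarrow> real) \<Rightarrow> (nat \<Rightarrow> 'w) \<Rightarrow> (nat \<Rightarrow> 'w) \<Rightarrow> real" where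
  "LamT Q f k R x y = Lam Q k R (Phi f x) (Phi f y)"

definition Q_lin_indep :: "real set \<Rightarrow> bool" where
  "Q_lin_indep A \<longleftrightarrow> (\<forall>B c. finite B \<and> B \<subseteq> A \<and> (\<Sum>b\<in>B. real_of_rat (c b) * b) = 0
       \<longrightarrow> (\<forall>b\<in>B. c b = 0))"

end

theory Submission
  imports Defs
begin

text \<open>Each value $\tilde\Lambda^k[R(\alpha)](x, y)$ is the $\lambda^k$-mass
  $\sum_{Q(i) \in G} 2^{-2^i-k}$ of a set $G$ of nonnegative rationals. In a vanishing rational
  combination of $1$ and finitely many such values, clearing denominators leaves a lacunary series
  $\sum_i z_i 2^{-2^i}$ with bounded integer digits and integer sum, so $z_i = 0$ for all large $i$.
  Since $\Phi$ writes injective codes of longer and longer prefixes into the odd coordinates, and the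
  $K(\alpha)$ are disjoint and the gauges strongly rigid, at a large odd coordinate $m$ the gauge value
  of any one of the pairs differs from those of all others. Two rationals of large index in
  $(m, m+1)$, on either side of this value but on the same side of all the others, give digits whose
  difference is the coefficient of that pair, which therefore vanishes.\<close>

lemma two_power_add_le: "(2::nat) ^ n + j \<le> 2 ^ (n + j)"
proof (induction j)
  case (Suc j)
  have "(1::nat) \<le> 2 ^ (n + j)" by simp
  with Suc have "Suc (2 ^ n + j) \<le> 2 * 2 ^ (n + j)" by linarith
  then show ?case by simp
qed simp

lemma lacunary_tail_bound:
  fixes s :: "nat \<Rightarrow> real"
  assumes bound: "\<And>i. \<bar>s i\<bar> \<le> M / 2 ^ 2 ^ i" and "s sums S"
  shows "\<bar>S - (\<Sum>i<n. s i)\<bar> \<le> 2 * M / 2 ^ 2 ^ n"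
proof -
  define g where "g j = M / 2 ^ 2 ^ n * (1/2) ^ j" for j
  have "g sums (M / 2 ^ 2 ^ n * (1 / (1 - 1/2)))"
    unfolding g_def by (intro sums_mult geometric_sums) simp
  then have g_sums: "g sums (2 * M / 2 ^ 2 ^ n)" by (simp add: mult.commute)
  have "M \<ge> 0" using bound[of 0] by simp
  have shifted_le: "\<bar>s (j + n)\<bar> \<le> g j" for j
  proof -
    have "(2::real) ^ (2 ^ n + j) \<le> 2 ^ 2 ^ (j + n)"
      by (rule power_increasing) (use two_power_add_le[of n j] in \<open>simp_all add: add.commute\<close>)
    then have "M / 2 ^ 2 ^ (j + n) \<le> M / 2 ^ (2 ^ n + j)"
      using \<open>M \<ge> 0\<close> by (intro divide_left_mono) simp_all
    also have "\<dots> = g j" by (simp add: g_def power_add power_one_over)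
    finally show ?thesis using bound[of "j + n"] by linarith
  qed
  have tail: "(\<lambda>j. s (j + n)) sums (S - (\<Sum>i<n. s i))"
    unfolding sums_iff_shift using \<open>s sums S\<close> by simp
  have "S - (\<Sum>i<n. s i) \<le> 2 * M / 2 ^ 2 ^ n"
    using shifted_le by (intro sums_le[OF _ tail g_sums]) (simp add: abs_le_iff)
  moreover have "- (2 * M / 2 ^ 2 ^ n) \<le> S - (\<Sum>i<n. s i)"
    using shifted_le by (intro sums_le[OF _ sums_minus[OF g_sums] tail]) (simp add: abs_le_iff minus_le_iff)
  ultimately show ?thesis by linarith
qed

lemma lacunary_partial_sum_times_power:
  fixes z :: "nat \<Rightarrow> int"
  shows "(2::real) ^ 2 ^ n * (\<Sum>i<Suc n. z i / 2 ^ 2 ^ i) = of_int (\<Sum>i<Suc n. z i * 2 ^ (2 ^ n - 2 ^ i))"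
proof -
  have "(2::real) ^ 2 ^ n * (z i / 2 ^ 2 ^ i) = of_int (z i * 2 ^ (2 ^ n - 2 ^ i))" if "i < Suc n" for i
  proof -
    have "(2::nat) ^ i \<le> 2 ^ n" using that by (intro power_increasing) simp_all
    then have "(2::real) ^ 2 ^ n = 2 ^ (2 ^ n - 2 ^ i) * 2 ^ 2 ^ i"
      by (simp flip: power_add)
    then show ?thesis by simp
  qed
  then show ?thesis unfolding sum_distrib_left of_int_sum by (intro sum.cong) simp_all
qed

text \<open>Since the gaps $2^{i+1} - 2^i$ grow, a tail of the series is too small to carry a nonzero
  integer digit: once $2M < 2^{2^n}$, multiplying the $n$-th remainder by $2^{2^n}$ gives an
  integer of modulus less than $1$.\<close>
lemma lacunary_series_imp_eventually_zero:
  fixes z :: "nat \<Rightarrow> int" and N :: int and M :: real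
  assumes bound: "\<And>i. \<bar>real_of_int (z i)\<bar> \<le> M" and sums: "(\<lambda>i. z i / 2 ^ 2 ^ i) sums N"
  shows "\<exists>n0. \<forall>i\<ge>n0. z i = 0"
proof -
  define s :: "nat \<Rightarrow> real" where "s i = z i / 2 ^ 2 ^ i" for i
  obtain n1 :: nat where n1: "2 * M < n1" using reals_Archimedean2 by blast
  have partial: "(\<Sum>i<Suc n. s i) = N" if "n \<ge> n1" for n
  proof -
    define T where "T = 2 ^ 2 ^ n * N - (\<Sum>i<Suc n. z i * 2 ^ (2 ^ n - 2 ^ i))"
    have T: "of_int T = (2::real) ^ 2 ^ n * (N - (\<Sum>i<Suc n. s i))"
      unfolding T_def s_def of_int_diff lacunary_partial_sum_times_power[symmetric]
      by (simp add: right_diff_distrib)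
    have "\<bar>s i\<bar> \<le> M / 2 ^ 2 ^ i" for i
      using bound[of i] by (simp add: s_def abs_divide divide_right_mono)
    then have "\<bar>N - (\<Sum>i<Suc n. s i)\<bar> \<le> 2 * M / 2 ^ 2 ^ Suc n"
      using sums by (intro lacunary_tail_bound) (simp_all add: s_def[abs_def])
    then have "\<bar>real_of_int T\<bar> \<le> 2 ^ 2 ^ n * (2 * M / 2 ^ 2 ^ Suc n)"
      unfolding T abs_mult power_abs abs_numeral by (rule mult_left_mono) simp
    also have "\<dots> = 2 * M / 2 ^ 2 ^ n"
    proof -
      have "(2::real) ^ 2 ^ Suc n = 2 ^ 2 ^ n * 2 ^ 2 ^ n" unfolding power_Suc mult_2 power_add ..
      then show ?thesis by simp
    qed
    also have "\<dots> < 1"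
    proof -
      have "real n1 \<le> real n" using that by simp
      moreover have "real n < 2 ^ n" using less_exp[of n] by (metis of_nat_less_numeral_power_cancel_iff)
      moreover have "(2::real) ^ n \<le> 2 ^ 2 ^ n" by (rule power_increasing) (simp_all add: less_imp_le)
      ultimately have "2 * M < 2 ^ 2 ^ n" using n1 by linarith
      then show ?thesis by simp
    qed
    finally have "T = 0" by linarith
    then show ?thesis using T by simp
  qed
  have "z (Suc n) = 0" if "n \<ge> n1" for n
    using partial[of n] partial[of "Suc n"] that by (simp add: s_def)
  then have "\<forall>i\<ge>Suc n1. z i = 0"
    by (metis Suc_le_D Suc_le_mono)
  then show ?thesis ..
qed

lemma rat_common_denominator:
  assumes "finite (A :: rat set)"
  shows "\<exists>d::int. d > 0 \<and> (\<forall>q\<in>A. \<exists>w::int. of_int d * q = of_int w)"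
  using assms
proof (induction A rule: finite_induct)
  case (insert q A)
  then obtain d where d: "d > 0" "\<forall>q'\<in>A. \<exists>w::int. of_int d * q' = of_int w" by blast
  obtain p e where pe: "quotient_of q = (p, e)" by fastforce
  have "e > 0" "q = of_int p / of_int e"
    using quotient_of_denom_pos[OF pe] quotient_of_div[OF pe] by simp_all
  have "\<exists>w::int. of_int (d * e) * q' = of_int w" if q': "q' \<in> insert q A" for q'
  proof (cases "q' = q")
    case True
    then show ?thesis using \<open>e > 0\<close> \<open>q = _\<close> by (intro exI[of _ "d * p"]) simp
  next
    case False
    then obtain w where "of_int d * q' = of_int w" using d q' by auto
    then show ?thesis by (intro exI[of _ "e * w"]) (simp add: algebra_simps)
  qed
  then show ?case using d \<open>e > 0\<close> by (intro exI[of _ "d * e"]) simp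
qed (auto intro: exI[of _ 1])

lemma lam_eq: "lam k i = 1 / (2 ^ k * 2 ^ 2 ^ i)"
  by (simp add: lam_def power_add mult.commute)

lemma summable_lam: "summable (lam k)"
proof (rule summable_comparison_test[OF _ summable_geometric[of "1/2"]])
  have "lam k i \<le> (1/2) ^ i" for i
  proof -
    have "(2::real) ^ i \<le> 2 ^ (2 ^ i + k)"
      by (rule power_increasing) (simp_all add: less_imp_le less_exp trans_le_add1)
    then show ?thesis by (simp add: lam_def power_one_over divide_simps)
  qed
  then show "\<exists>N. \<forall>n\<ge>N. norm (lam k n) \<le> (1/2) ^ n" by (simp add: lam_def)
qed simp

lemma pairing_sums:
  assumes "\<And>i. a i \<ge> 0" and "summable a"
  shows "(\<lambda>i. if Q i \<in> A then a i else 0) sums pairing Q a A"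
  unfolding pairing_def
  by (rule summable_sums, rule summable_comparison_test[OF _ \<open>summable a\<close>]) (simp add: assms(1))

lemma lacunary_combination_eventually_zero:
  fixes c :: "'p \<Rightarrow> rat" and G :: "'p \<Rightarrow> rat set"
  assumes "finite P" and "(\<Sum>p\<in>P. of_rat (c p) * pairing Q (lam k) (G p)) \<in> \<rat>"
  shows "\<exists>n0. \<forall>i\<ge>n0. (\<Sum>p\<in>P. if Q i \<in> G p then c p else 0) = 0"
proof -
  obtain C where C: "(\<Sum>p\<in>P. of_rat (c p) * pairing Q (lam k) (G p)) = of_rat C"
    using assms(2) Rats_cases by metis
  obtain d where d: "d > 0" "\<forall>q\<in>insert C (c ` P). \<exists>w::int. of_int d * q = of_int w"
    using rat_common_denominator[of "insert C (c ` P)"] \<open>finite P\<close> by auto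
  then have "\<forall>p\<in>P. \<exists>w::int. of_int d * c p = of_int w" by blast
  then obtain W where W: "\<And>p. p \<in> P \<Longrightarrow> of_int d * c p = of_int (W p)"
    by metis
  obtain NC where NC: "of_int d * C = of_int NC" using d by blast
  define z where "z i = (\<Sum>p\<in>P. if Q i \<in> G p then W p else 0)" for i
  have W_real: "real_of_int d * of_rat (c p) = of_int (W p)" if "p \<in> P" for p
    using arg_cong[OF W[OF that], of real_of_rat] by (simp add: of_rat_mult)
  have scaled_term: "real_of_int d * 2 ^ k * (\<Sum>p\<in>P. of_rat (c p) * (if Q i \<in> G p then lam k i else 0))
      = z i / 2 ^ 2 ^ i" for i
    unfolding z_def of_int_sum sum_distrib_left sum_divide_distrib
    by (intro sum.cong refl) (simp add: lam_eq W_real[symmetric])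
  have "(\<lambda>i. \<Sum>p\<in>P. of_rat (c p) * (if Q i \<in> G p then lam k i else 0)) sums of_rat C"
    unfolding C[symmetric] by (intro sums_sum sums_mult pairing_sums summable_lam) (simp add: lam_def)
  from sums_mult[OF this, of "real_of_int d * 2 ^ k"]
  have "(\<lambda>i. z i / 2 ^ 2 ^ i) sums (real_of_int d * 2 ^ k * of_rat C)"
    unfolding scaled_term .
  moreover have "real_of_int d * 2 ^ k * of_rat C = of_int (2 ^ k * NC)"
    using arg_cong[OF NC, of real_of_rat] by (simp add: of_rat_mult mult_ac)
  ultimately have z_sums: "(\<lambda>i. z i / 2 ^ 2 ^ i) sums of_int (2 ^ k * NC)" by simp
  have "\<bar>z i\<bar> \<le> (\<Sum>p\<in>P. \<bar>W p\<bar>)" for i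
    unfolding z_def by (rule order_trans[OF sum_abs sum_mono]) simp
  then have "\<bar>real_of_int (z i)\<bar> \<le> of_int (\<Sum>p\<in>P. \<bar>W p\<bar>)" for i
    by (metis of_int_abs of_int_le_iff)
  from lacunary_series_imp_eventually_zero[OF this z_sums]
  obtain n0 where n0: "\<forall>i\<ge>n0. z i = 0" by blast
  have "of_int d * (\<Sum>p\<in>P. if Q i \<in> G p then c p else 0) = of_int (z i)" for i
    unfolding z_def of_int_sum sum_distrib_left by (intro sum.cong refl) (simp add: W)
  then have "(\<Sum>p\<in>P. if Q i \<in> G p then c p else 0) = 0" if "i \<ge> n0" for i
    using n0 that d(1) by (metis mult_eq_0_iff of_int_0 of_int_eq_0_iff less_irrefl)
  then show ?thesis by blast
qed

text \<open>Digits at two large indices that differ only in membership in $G(p_0)$ differ exactly by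
  the coefficient of $v(p_0)$.\<close>
lemma Q_lin_indep_insert_one_if_separating:
  fixes v :: "'p \<Rightarrow> real" and G :: "'p \<Rightarrow> rat set"
  assumes rep: "\<And>p. p \<in> P \<Longrightarrow> v p = pairing Q (lam k) (G p)"
    and separating: "\<And>P' p0 n0. finite P' \<Longrightarrow> P' \<subseteq> P \<Longrightarrow> inj_on v P' \<Longrightarrow> p0 \<in> P' \<Longrightarrow>
      \<exists>i1 i2. n0 \<le> i1 \<and> n0 \<le> i2 \<and> Q i1 \<in> G p0 \<and> Q i2 \<notin> G p0 \<and>
        (\<forall>p\<in>P' - {p0}. Q i1 \<in> G p \<longleftrightarrow> Q i2 \<in> G p)"
  shows "Q_lin_indep (insert 1 (v ` P))"
  unfolding Q_lin_indep_def
proof (intro allI impI)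
  fix B c
  assume "finite B \<and> B \<subseteq> insert 1 (v ` P) \<and> (\<Sum>b\<in>B. of_rat (c b) * b) = 0"
  then have B: "finite B" "B \<subseteq> insert 1 (v ` P)" and sum_B: "(\<Sum>b\<in>B. of_rat (c b) * b) = 0"
    by auto
  define B' where "B' = B - {1}"
  have "B' \<subseteq> v ` P" using B(2) by (auto simp: B'_def)
  then obtain P' where P': "P' \<subseteq> P" "inj_on v P'" and v_P': "v ` P' = B'"
    unfolding subset_image_inj by blast
  have "finite P'" using finite_image_iff[OF P'(2)] v_P' B(1) by (simp add: B'_def)
  define C where "C = (if 1 \<in> B then c 1 else 0)"
  have sum_B': "(\<Sum>b\<in>B'. of_rat (c b) * b) = - of_rat C"
  proof (cases "1 \<in> B")
    case True
    then show ?thesis using sum_B B(1) by (simp add: B'_def C_def sum.remove)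
  next
    case False
    then show ?thesis using sum_B by (simp add: B'_def C_def)
  qed
  have "v p = pairing Q (lam k) (G p)" if "p \<in> P'" for p
    using rep P'(1) that by blast
  then have "(\<Sum>p\<in>P'. of_rat (c (v p)) * pairing Q (lam k) (G p)) = (\<Sum>b\<in>B'. of_rat (c b) * b)"
    unfolding v_P'[symmetric] sum.reindex[OF P'(2)] by simp
  then have "(\<Sum>p\<in>P'. of_rat (c (v p)) * pairing Q (lam k) (G p)) \<in> \<rat>"
    unfolding sum_B' by simp
  from lacunary_combination_eventually_zero[OF \<open>finite P'\<close> this]
  obtain n0 where n0: "\<forall>i\<ge>n0. (\<Sum>p\<in>P'. if Q i \<in> G p then c (v p) else 0) = 0"
    by blast
  have c_B': "c b = 0" if b: "b \<in> B'" for b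
  proof -
    obtain p0 where p0: "p0 \<in> P'" "v p0 = b" using b v_P' by blast
    obtain i1 i2 where i: "n0 \<le> i1" "n0 \<le> i2" "Q i1 \<in> G p0" "Q i2 \<notin> G p0"
        and same: "\<forall>p\<in>P' - {p0}. Q i1 \<in> G p \<longleftrightarrow> Q i2 \<in> G p"
      using separating[OF \<open>finite P'\<close> P' p0(1)] by blast
    have digit: "(\<Sum>p\<in>P'. if Q i \<in> G p then c (v p) else 0)
        = (if Q i \<in> G p0 then c b else 0) + (\<Sum>p\<in>P' - {p0}. if Q i \<in> G p then c (v p) else 0)" for i
      using \<open>finite P'\<close> p0 by (simp add: sum.remove)
    have "(\<Sum>p\<in>P' - {p0}. if Q i1 \<in> G p then c (v p) else 0)
        = (\<Sum>p\<in>P' - {p0}. if Q i2 \<in> G p then c (v p) else 0)"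
      using same by (intro sum.cong) auto
    then show ?thesis using digit[of i1] digit[of i2] n0 i by simp
  qed
  then have "C = 0" using sum_B' by simp
  then show "\<forall>b\<in>B. c b = 0" using c_B' by (auto simp: B'_def C_def split: if_splits)
qed

lemma pairing_Union_sums:
  fixes a :: "nat \<Rightarrow> real"
  assumes nonneg: "\<And>i. a i \<ge> 0" and "summable a" and disj: "disjoint_family S"
  shows "(\<lambda>m. pairing Q a (S m)) sums pairing Q a (\<Union>m. S m)"
proof -
  define H where "H = (\<lambda>(m, i). if Q i \<in> S m then a i else 0)"
  define \<phi> where "\<phi> i = ((SOME m. Q i \<in> S m), i)" for i
  have has_sum_restrict: "((\<lambda>i. if Q i \<in> A then a i else 0) has_sum pairing Q a A) UNIV" for A
    by (rule sums_nonneg_imp_has_sum[OF pairing_sums[OF nonneg \<open>summable a\<close>]]) (simp add: nonneg)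
  have H_\<phi>: "H \<circ> \<phi> = (\<lambda>i. if Q i \<in> (\<Union>m. S m) then a i else 0)"
  proof
    fix i
    show "(H \<circ> \<phi>) i = (if Q i \<in> (\<Union>m. S m) then a i else 0)"
    proof (cases "\<exists>m. Q i \<in> S m")
      case True
      then have "Q i \<in> S (SOME m. Q i \<in> S m)" by (rule someI_ex)
      then show ?thesis by (auto simp: H_def \<phi>_def)
    qed (auto simp: H_def \<phi>_def)
  qed
  have "((H \<circ> \<phi>) has_sum pairing Q a (\<Union>m. S m)) UNIV"
    unfolding H_\<phi> by (rule has_sum_restrict)
  then have "(H has_sum pairing Q a (\<Union>m. S m)) (range \<phi>)"
    by (subst has_sum_reindex) (simp_all add: inj_def \<phi>_def)
  moreover have "H (m, i) = 0" if "(m, i) \<notin> range \<phi>" for m i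
  proof (rule ccontr)
    assume "H (m, i) \<noteq> 0"
    then have "Q i \<in> S m" by (auto simp: H_def split: if_splits)
    then have "Q i \<in> S (SOME m. Q i \<in> S m)" by (rule someI)
    with \<open>Q i \<in> S m\<close> disj have "(SOME m. Q i \<in> S m) = m" by (auto simp: disjoint_family_on_def)
    with that show False by (simp add: \<phi>_def image_iff)
  qed
  ultimately have "(H has_sum pairing Q a (\<Union>m. S m)) (UNIV \<times> UNIV)"
    by (subst (asm) has_sum_cong_neutral[where T = "UNIV \<times> UNIV" and g = H]) auto
  then have "((\<lambda>m. pairing Q a (S m)) has_sum pairing Q a (\<Union>m. S m)) UNIV"
    by (rule has_sum_SigmaD) (simp add: H_def has_sum_restrict)
  then show ?thesis by (rule has_sum_imp_sums)
qed

lemma mem_J_iff: "q \<in> J m t \<longleftrightarrow> real m \<le> of_rat q \<and> of_rat q < t"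
  unfolding J_def by (metis mem_Collect_eq of_rat_less_eq of_rat_of_nat_eq)

lemma disjoint_family_J:
  assumes "\<And>m. r m \<le> real m + 1"
  shows "disjoint_family (\<lambda>m. J m (r m))"
  unfolding disjoint_family_on_def
proof (intro ballI impI)
  have "m = m'" if "q \<in> J m (r m)" "q \<in> J m' (r m')" "m \<le> m'" for q m m'
    using that assms[of m] by (auto simp: mem_J_iff)
  then show "J m (r m) \<inter> J m' (r m') = {}" if "m \<noteq> m'" for m m'
    using that by (metis disjoint_iff nle_le)
qed

lemma mem_Union_J_iff:
  assumes "\<And>m. r m \<le> real m + 1" and "real m \<le> of_rat q" "of_rat q < real m + 1"
  shows "q \<in> (\<Union>m'. J m' (r m')) \<longleftrightarrow> of_rat q < r m"
proof
  assume "q \<in> (\<Union>m'. J m' (r m'))"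
  then obtain m' where m': "real m' \<le> of_rat q" "of_rat q < r m'" by (auto simp: mem_J_iff)
  with assms(2,3) assms(1)[of m'] have "m' = m" by linarith
  then show "of_rat q < r m" using m' by simp
qed (use assms in \<open>auto simp: mem_J_iff\<close>)

lemma gauge_system_sym: "gauge_system S R \<Longrightarrow> R m u v = R m v u"
  by (simp add: gauge_system_def semi_metric_on_def)

lemma gauge_system_eq_0_iff: "gauge_system S R \<Longrightarrow> R m u v = 0 \<longleftrightarrow> u = v"
  by (simp add: gauge_system_def semi_metric_on_def)

lemma gauge_system_value:
  "gauge_system S R \<Longrightarrow> u \<noteq> v \<Longrightarrow> R m u v \<in> S \<and> real m < R m u v \<and> R m u v < real m + 1"
  unfolding gauge_system_def semi_metric_on_def by auto

lemma gauge_system_le: "gauge_system S R \<Longrightarrow> R m u v \<le> real m + 1"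
  using gauge_system_eq_0_iff[of S R m u v] gauge_system_value[of S R u v m] by fastforce

lemma gauge_system_rigid:
  "gauge_system S R \<Longrightarrow> R m u v = R m u' v' \<Longrightarrow> u \<noteq> v \<Longrightarrow> {u, v} = {u', v'}"
  unfolding gauge_system_def strongly_rigid_def semi_metric_on_def by metis

definition gauge_coord ::
    "(nat \<Rightarrow> 'w list \<Rightarrow> 'w) \<Rightarrow> ('i \<Rightarrow> nat \<Rightarrow> 'w \<Rightarrow> 'w \<Rightarrow> real) \<Rightarrow> 'i \<times> (nat \<Rightarrow> 'w) \<times> (nat \<Rightarrow> 'w) \<Rightarrow> nat \<Rightarrow> real"
  where "gauge_coord f R = (\<lambda>(a, x, y) m. R a m (Phi f x m) (Phi f y m))"

lemma gauge_coord_simp [simp]: "gauge_coord f R (a, x, y) m = R a m (Phi f x m) (Phi f y m)"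
  by (simp add: gauge_coord_def)

definition LamT_rats ::
    "(nat \<Rightarrow> 'w list \<Rightarrow> 'w) \<Rightarrow> ('i \<Rightarrow> nat \<Rightarrow> 'w \<Rightarrow> 'w \<Rightarrow> real) \<Rightarrow> 'i \<times> (nat \<Rightarrow> 'w) \<times> (nat \<Rightarrow> 'w) \<Rightarrow> rat set"
  where "LamT_rats f R p = (\<Union>m. J m (gauge_coord f R p m))"

lemma LamT_eq_pairing:
  assumes "\<And>a. gauge_system (K a) (R a)"
  shows "LamT Q f k (R a) x y = pairing Q (lam k) (LamT_rats f R (a, x, y))"
  unfolding LamT_def Lam_def LamM_def LamT_rats_def gauge_coord_simp
  by (rule sums_unique[symmetric], rule pairing_Union_sums)
    (simp_all add: lam_def summable_lam disjoint_family_J gauge_system_le[OF assms])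

lemma LamT_commute: "gauge_system S R \<Longrightarrow> LamT Q f k R x y = LamT Q f k R y x"
  by (simp add: LamT_def Lam_def LamM_def gauge_system_sym[of S R])

lemma Phi_odd: "Phi f x (2 * n + 1) = f n (map x [0..<n + 1])"
  by (simp add: Phi_def)

lemma Phi_odd_eventually_ne:
  assumes f_inj: "\<And>n. inj_on (f n) {xs. length xs = Suc n}" and "x \<noteq> y"
  shows "\<forall>\<^sub>F n in sequentially. Phi f x (2 * n + 1) \<noteq> Phi f y (2 * n + 1)"
proof -
  obtain j where j: "x j \<noteq> y j" using \<open>x \<noteq> y\<close> by auto
  have "Phi f x (2 * n + 1) \<noteq> Phi f y (2 * n + 1)" if "j \<le> n" for n
  proof -
    have "j \<in> set [0..<n + 1]" using that by (cases "j = n") simp_all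
    then have "map x [0..<n + 1] \<noteq> map y [0..<n + 1]" using j by (metis map_eq_conv)
    moreover have "map x [0..<n + 1] \<in> {xs. length xs = Suc n}" "map y [0..<n + 1] \<in> {xs. length xs = Suc n}"
      by simp_all
    ultimately show ?thesis by (simp only: Phi_odd inj_on_eq_iff[OF f_inj]) simp
  qed
  then show ?thesis unfolding eventually_sequentially by blast
qed

text \<open>Odd coordinates of $\Phi$ remember whole prefixes, so distinct pairs eventually differ
  there; disjointness of the $K(\alpha)$ and strong rigidity then separate the gauge values.\<close>
lemma gauge_values_eventually_distinct:
  assumes f_inj: "\<And>n. inj_on (f n) {xs. length xs = Suc n}"
    and disj: "\<And>a b. a \<noteq> b \<Longrightarrow> disjnt (K a) (K b)"
    and gauge: "\<And>a. gauge_system (K a) (R a)"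
    and "x \<noteq> y" "x' \<noteq> y'" and distinct: "a \<noteq> a' \<or> {x, y} \<noteq> {x', y'}"
  shows "\<forall>\<^sub>F n in sequentially. gauge_coord f R (a, x, y) (2 * n + 1) \<noteq> gauge_coord f R (a', x', y') (2 * n + 1)"
proof -
  let ?\<phi> = "\<lambda>z n. Phi f z (2 * n + 1)"
  have ev_ne: "\<forall>\<^sub>F n in sequentially. ?\<phi> u n \<noteq> ?\<phi> v n" if "u \<noteq> v" for u v
    using Phi_odd_eventually_ne[OF f_inj that] .
  have ne: "\<forall>\<^sub>F n in sequentially. ?\<phi> x n \<noteq> ?\<phi> y n \<and> ?\<phi> x' n \<noteq> ?\<phi> y' n"
    using ev_ne[OF \<open>x \<noteq> y\<close>] ev_ne[OF \<open>x' \<noteq> y'\<close>] by (rule eventually_conj)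
  have "\<forall>\<^sub>F n in sequentially. R a (2 * n + 1) (?\<phi> x n) (?\<phi> y n) \<noteq> R a' (2 * n + 1) (?\<phi> x' n) (?\<phi> y' n)"
  proof (cases "a = a'")
    case False
    show ?thesis
    proof (rule eventually_mono[OF ne], elim conjE)
      fix n assume "?\<phi> x n \<noteq> ?\<phi> y n" "?\<phi> x' n \<noteq> ?\<phi> y' n"
      then have "R a (2 * n + 1) (?\<phi> x n) (?\<phi> y n) \<in> K a" "R a' (2 * n + 1) (?\<phi> x' n) (?\<phi> y' n) \<in> K a'"
        using gauge_system_value[OF gauge] by blast+
      then show "R a (2 * n + 1) (?\<phi> x n) (?\<phi> y n) \<noteq> R a' (2 * n + 1) (?\<phi> x' n) (?\<phi> y' n)"
        using disj[OF False] by (auto simp: disjnt_def)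
    qed
  next
    case True
    have ev_ne_or: "\<forall>\<^sub>F n in sequentially. ?\<phi> u n \<noteq> ?\<phi> v n \<or> ?\<phi> u' n \<noteq> ?\<phi> v' n"
      if "u \<noteq> v \<or> u' \<noteq> v'" for u v u' v'
      using that
    proof
      assume "u \<noteq> v"
      from ev_ne[OF this] show ?thesis by (rule eventually_mono) simp
    next
      assume "u' \<noteq> v'"
      from ev_ne[OF this] show ?thesis by (rule eventually_mono) simp
    qed
    from True distinct have "x \<noteq> x' \<or> y \<noteq> y'" "x \<noteq> y' \<or> y \<noteq> x'" by auto
    from this[THEN ev_ne_or]
    have "\<forall>\<^sub>F n in sequentially. {?\<phi> x n, ?\<phi> y n} \<noteq> {?\<phi> x' n, ?\<phi> y' n}"
      by eventually_elim (auto simp: doubleton_eq_iff)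
    with ne show ?thesis
      by eventually_elim (use True gauge_system_rigid[OF gauge] in blast)
  qed
  then show ?thesis by simp
qed

lemma enum_rats_separate_point:
  fixes Q :: "nat \<Rightarrow> rat" and T :: "real set" and a b t :: real
  assumes Q: "bij_betw Q UNIV {q. q \<ge> 0}" and T: "finite T" "t \<notin> T"
    and "0 \<le> a" "a < t" "t < b"
  shows "\<exists>i1 i2. n0 \<le> i1 \<and> n0 \<le> i2 \<and> a < of_rat (Q i1) \<and> of_rat (Q i1) < t
    \<and> t < of_rat (Q i2) \<and> of_rat (Q i2) < b \<and> (\<forall>s\<in>T. of_rat (Q i1) < s \<longleftrightarrow> of_rat (Q i2) < s)"
proof -
  have pick: "\<exists>i. lo < of_rat (Q i) \<and> of_rat (Q i) < hi" if "0 \<le> lo" "lo < hi" for lo hi :: real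
  proof -
    obtain r where "r \<in> \<rat>" "lo < r" "r < hi" using Rats_dense_in_real[OF \<open>lo < hi\<close>] by blast
    then obtain q where q: "lo < of_rat q" "of_rat q < hi" by (auto elim: Rats_cases)
    then have "q \<ge> 0" using \<open>0 \<le> lo\<close> by (metis less_le_trans linorder_not_le of_rat_less_0_iff order_less_imp_le)
    then obtain i where "Q i = q" using bij_betw_imp_surj_on[OF Q] by (metis (mono_tags) imageE mem_Collect_eq)
    then show ?thesis using q by blast
  qed
  \<comment> \<open>The values $Q(j)$, $j < n_0$, are added as obstacles so that the chosen indices are at least $n_0$.\<close>
  define F where "F = T \<union> (\<lambda>j. real_of_rat (Q j)) ` {..<n0}"
  define L where "L = insert a {s \<in> F. s < t}"
  define U where "U = insert b {s \<in> F. t < s}"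
  have "finite F" using T by (simp add: F_def)
  then have "finite L" "finite U" by (simp_all add: L_def U_def)
  have lo: "a \<le> Max L" "Max L < t" "\<And>s. s \<in> F \<Longrightarrow> s < t \<Longrightarrow> s \<le> Max L"
    using Max_ge[OF \<open>finite L\<close>] Max_less_iff[OF \<open>finite L\<close>] \<open>a < t\<close> by (auto simp: L_def)
  have hi: "Min U \<le> b" "t < Min U" "\<And>s. s \<in> F \<Longrightarrow> t < s \<Longrightarrow> Min U \<le> s"
    using Min_le[OF \<open>finite U\<close>] Min_gr_iff[OF \<open>finite U\<close>] \<open>t < b\<close> by (auto simp: U_def)
  have "0 \<le> Max L" "0 \<le> t" using lo(1,2) \<open>0 \<le> a\<close> by linarith+
  then obtain i1 i2 where i1: "Max L < of_rat (Q i1)" "of_rat (Q i1) < t"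
    and i2: "t < of_rat (Q i2)" "of_rat (Q i2) < Min U"
    using pick[OF _ lo(2)] pick[OF _ hi(2)] by blast
  have "n0 \<le> i1"
  proof (rule ccontr)
    assume "\<not> n0 \<le> i1"
    then have "of_rat (Q i1) \<in> F" by (simp add: F_def)
    with lo(3) i1 show False by fastforce
  qed
  moreover have "n0 \<le> i2"
  proof (rule ccontr)
    assume "\<not> n0 \<le> i2"
    then have "of_rat (Q i2) \<in> F" by (simp add: F_def)
    with hi(3) i2 show False by fastforce
  qed
  moreover have "of_rat (Q i1) < s \<longleftrightarrow> of_rat (Q i2) < s" if "s \<in> T" for s
  proof -
    have "s \<in> F" "s \<noteq> t" using that T(2) by (auto simp: F_def)
    then show ?thesis using lo(3)[of s] hi(3)[of s] i1 i2 by fastforce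
  qed
  ultimately show ?thesis using i1 i2 lo(1) hi(1) by (intro exI[of _ i1] exI[of _ i2]) auto
qed

lemma Union_J_separating_indices:
  fixes Q :: "nat \<Rightarrow> rat" and r :: "'p \<Rightarrow> nat \<Rightarrow> real"
  assumes Q: "bij_betw Q UNIV {q. q \<ge> 0}" and "finite P"
    and le: "\<And>p m. r p m \<le> real m + 1"
    and r0: "real m < r p0 m" "r p0 m < real m + 1"
    and distinct: "\<And>p. p \<in> P - {p0} \<Longrightarrow> r p m \<noteq> r p0 m"
  shows "\<exists>i1 i2. n0 \<le> i1 \<and> n0 \<le> i2 \<and> Q i1 \<in> (\<Union>m. J m (r p0 m)) \<and> Q i2 \<notin> (\<Union>m. J m (r p0 m))
    \<and> (\<forall>p\<in>P - {p0}. Q i1 \<in> (\<Union>m. J m (r p m)) \<longleftrightarrow> Q i2 \<in> (\<Union>m. J m (r p m)))"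
proof -
  obtain i1 i2 where i: "n0 \<le> i1" "n0 \<le> i2" "real m < of_rat (Q i1)" "of_rat (Q i1) < r p0 m"
      "r p0 m < of_rat (Q i2)" "of_rat (Q i2) < real m + 1"
    and same: "\<forall>s\<in>(\<lambda>p. r p m) ` (P - {p0}). of_rat (Q i1) < s \<longleftrightarrow> of_rat (Q i2) < s"
    using enum_rats_separate_point[OF Q, of "(\<lambda>p. r p m) ` (P - {p0})" "r p0 m" "real m" "real m + 1" n0]
      \<open>finite P\<close> distinct r0 by force
  have "Q i1 \<in> (\<Union>m'. J m' (r p m')) \<longleftrightarrow> of_rat (Q i1) < r p m"
    and "Q i2 \<in> (\<Union>m'. J m' (r p m')) \<longleftrightarrow> of_rat (Q i2) < r p m" for p
    by (rule mem_Union_J_iff[OF le]; use i r0 in linarith)+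
  then show ?thesis using i same by (intro exI[of _ i1] exI[of _ i2]) auto
qed

lemma gauge_coord_eventually_isolated:
  assumes f_inj: "\<And>n. inj_on (f n) {xs. length xs = Suc n}"
    and disj: "\<And>a b. a \<noteq> b \<Longrightarrow> disjnt (K a) (K b)"
    and gauge: "\<And>a. gauge_system (K a) (R a)"
    and P: "finite P" "P \<subseteq> {(a, x, y). x \<noteq> y}" "inj_on (\<lambda>(a, x, y). LamT Q f k (R a) x y) P"
    and "p0 \<in> P"
  shows "\<forall>\<^sub>F n in sequentially. gauge_coord f R p0 (2 * n + 1) \<noteq> 0 \<and>
    (\<forall>p\<in>P - {p0}. gauge_coord f R p (2 * n + 1) \<noteq> gauge_coord f R p0 (2 * n + 1))"
proof -
  obtain a0 x0 y0 where p0: "p0 = (a0, x0, y0)" by (cases p0)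
  have "x0 \<noteq> y0" using P(2) \<open>p0 \<in> P\<close> p0 by auto
  have "\<forall>\<^sub>F n in sequentially. gauge_coord f R p0 (2 * n + 1) \<noteq> 0"
    using Phi_odd_eventually_ne[OF f_inj \<open>x0 \<noteq> y0\<close>]
    by (simp add: p0 gauge_system_eq_0_iff[OF gauge])
  moreover have "\<forall>\<^sub>F n in sequentially. gauge_coord f R p (2 * n + 1) \<noteq> gauge_coord f R p0 (2 * n + 1)"
    if p: "p \<in> P - {p0}" for p
  proof -
    obtain a x y where p_eq: "p = (a, x, y)" by (cases p)
    have "x \<noteq> y" using P(2) p p_eq by auto
    have distinct: "a \<noteq> a0 \<or> {x, y} \<noteq> {x0, y0}"
    proof (rule ccontr)
      assume "\<not> (a \<noteq> a0 \<or> {x, y} \<noteq> {x0, y0})"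
      then have "LamT Q f k (R a) x y = LamT Q f k (R a0) x0 y0"
        using LamT_commute[OF gauge] by (auto simp: doubleton_eq_iff)
      then show False using inj_onD[OF P(3)] p p_eq p0 \<open>p0 \<in> P\<close> by fastforce
    qed
    show ?thesis
      unfolding p_eq p0
      by (rule gauge_values_eventually_distinct[where K = K and R = R,
            OF f_inj disj gauge \<open>x \<noteq> y\<close> \<open>x0 \<noteq> y0\<close> distinct])
  qed
  then have "\<forall>\<^sub>F n in sequentially. \<forall>p\<in>P - {p0}. gauge_coord f R p (2 * n + 1) \<noteq> gauge_coord f R p0 (2 * n + 1)"
    using P(1) by (intro eventually_ball_finite) auto
  ultimately show ?thesis by (rule eventually_conj)
qed

lemma gauge_separating_indices:
  fixes Q :: "nat \<Rightarrow> rat" and R :: "'i \<Rightarrow> nat \<Rightarrow> 'w \<Rightarrow> 'w \<Rightarrow> real"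
  assumes Q: "bij_betw Q UNIV {q. q \<ge> 0}"
    and f_inj: "\<And>n. inj_on (f n) {xs. length xs = Suc n}"
    and disj: "\<And>a b. a \<noteq> b \<Longrightarrow> disjnt (K a) (K b)"
    and gauge: "\<And>a. gauge_system (K a) (R a)"
    and P: "finite P" "P \<subseteq> {(a, x, y). x \<noteq> y}" "inj_on (\<lambda>(a, x, y). LamT Q f k (R a) x y) P"
    and "p0 \<in> P"
  shows "\<exists>i1 i2. n0 \<le> i1 \<and> n0 \<le> i2 \<and> Q i1 \<in> LamT_rats f R p0 \<and> Q i2 \<notin> LamT_rats f R p0
    \<and> (\<forall>p\<in>P - {p0}. Q i1 \<in> LamT_rats f R p \<longleftrightarrow> Q i2 \<in> LamT_rats f R p)"
proof -
  let ?r = "gauge_coord f R"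
  obtain N where N: "\<forall>n\<ge>N. ?r p0 (2 * n + 1) \<noteq> 0 \<and> (\<forall>p\<in>P - {p0}. ?r p (2 * n + 1) \<noteq> ?r p0 (2 * n + 1))"
    using gauge_coord_eventually_isolated[OF f_inj disj gauge P \<open>p0 \<in> P\<close>]
    unfolding eventually_sequentially by blast
  define m where "m = 2 * N + 1"
  have "?r p0 m \<noteq> 0" and m_ne: "\<And>p. p \<in> P - {p0} \<Longrightarrow> ?r p m \<noteq> ?r p0 m"
    using N by (auto simp: m_def)
  have "real m < ?r p0 m \<and> ?r p0 m < real m + 1"
    using \<open>?r p0 m \<noteq> 0\<close> gauge_system_value[OF gauge] gauge_system_eq_0_iff[OF gauge]
    by (cases p0) auto
  moreover have "?r p m' \<le> real m' + 1" for p m'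
    by (cases p) (simp add: gauge_system_le[OF gauge])
  ultimately show ?thesis
    unfolding LamT_rats_def using Union_J_separating_indices[OF Q P(1), of ?r m p0 n0] m_ne by blast
qed

theorem corollary4p25:
  fixes Q :: "nat \<Rightarrow> rat"
    and f :: "nat \<Rightarrow> 'w list \<Rightarrow> 'w"
    and K :: "'i \<Rightarrow> real set"
    and R :: "'i \<Rightarrow> nat \<Rightarrow> 'w \<Rightarrow> 'w \<Rightarrow> real"
    and k :: nat
  assumes Q: "enum_ok Q"
    and Omega: "(UNIV :: 'w set) \<approx> (UNIV :: real set)"
    and f_inj: "\<And>n. inj_on (f n) {xs. length xs = Suc n}"
    and index: "(UNIV :: 'i set) \<approx> (UNIV :: real option set)"
    and disj: "\<And>a b. a \<noteq> b \<Longrightarrow> disjnt (K a) (K b)"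
    and ud: "\<And>a. ubiq_dense (K a)"
    and card: "\<And>a. K a \<approx> (UNIV :: real set)"
    and gauge: "\<And>a. gauge_system (K a) (R a)"
  shows "Q_lin_indep ({1} \<union> (\<Union>a. {LamT Q f k (R a) x y | x y. x \<noteq> y}))"
proof -
  \<comment> \<open>\<open>Omega\<close>, \<open>index\<close>, \<open>ud\<close> and \<open>card\<close> are not needed: disjointness, rigidity and the
    injectivity of the \<open>f n\<close> suffice.\<close>
  define P :: "('i \<times> (nat \<Rightarrow> 'w) \<times> (nat \<Rightarrow> 'w)) set" where "P = {(a, x, y). x \<noteq> y}"
  have Q_bij: "bij_betw Q UNIV {q. q \<ge> 0}" using Q by (simp add: enum_ok_def)
  have "{1} \<union> (\<Union>a. {LamT Q f k (R a) x y | x y. x \<noteq> y})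
      = insert 1 ((\<lambda>(a, x, y). LamT Q f k (R a) x y) ` P)"
    unfolding P_def by (auto simp: image_def)
  moreover have "Q_lin_indep (insert 1 ((\<lambda>(a, x, y). LamT Q f k (R a) x y) ` P))"
  proof (rule Q_lin_indep_insert_one_if_separating[where G = "LamT_rats f R"])
    show "(case p of (a, x, y) \<Rightarrow> LamT Q f k (R a) x y) = pairing Q (lam k) (LamT_rats f R p)" for p
      using LamT_eq_pairing[OF gauge] by (cases p) simp
    show "\<exists>i1 i2. n0 \<le> i1 \<and> n0 \<le> i2 \<and> Q i1 \<in> LamT_rats f R p0 \<and> Q i2 \<notin> LamT_rats f R p0 \<and>
        (\<forall>p\<in>P' - {p0}. Q i1 \<in> LamT_rats f R p \<longleftrightarrow> Q i2 \<in> LamT_rats f R p)"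
      if "finite P'" "P' \<subseteq> P" "inj_on (\<lambda>(a, x, y). LamT Q f k (R a) x y) P'" "p0 \<in> P'" for P' p0 n0
      using that(2) by (intro gauge_separating_indices[OF Q_bij f_inj disj gauge that(1) _ that(3,4)])
        (auto simp: P_def)
  qed
  ultimately show ?thesis by simp
qed

end
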